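(* With the setting below, the operator $\bar\pi:\Omega^1\to\mathfrak{X}_{\mathcal{A}}(\Lambda_0)$ defined by $\bar\pi(\alpha_{\mathbf{p}})(\gamma)=\Phi_\gamma^{-1}\pi_1(\alpha_{\mathbf{p}_\gamma})$, which explicitly is $$\bar\pi(\alpha_{\mathbf{p}})(\gamma)=D_s^{-1}(\mathbf{k}_\gamma\mathbf{p}_\gamma')\mathbf{T}_\gamma+\mathbf{p}_\gamma'\mathbf{N}_\gamma,$$ is a Hamiltonian operator: it is skew-symmetric, i.e. $\alpha_{\mathbf{q}}(\bar\pi\alpha_{\mathbf{p}})=-\alpha_{\mathbf{p}}(\bar\pi\alpha_{\mathbf{q}})$; its image $\bar\pi\Omega^1$ is a Lie subalgebra of $\mathfrak{X}_{\mathcal{A}}(\Lambda_0)$; and the $2$-form $\omega(\bar\pi\alpha,\bar\pi\beta)=\beta(\bar\pi\alpha)$ is closed, i.e. $d\omega=0$, where $d\omega(\xi_1,\xi_2,\xi_3)=\sum_{\mathrm{cyclic}}\big(\xi_1\,\omega(\xi_2,\xi_3)-\omega([\xi_1,\xi_2],\xi_3)\big)$ for $\xi_i\in\bar\pi\Omega^1$.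
   Context: $\Lambda_0$ is the space of arc-length parametrized plane curves; for $\gamma\in\Lambda_0$, $\{\mathbf{T}_\gamma,\mathbf{N}_\gamma\}$ is its Frenet frame and $\mathbf{k}_\gamma$ its curvature ($\mathbf{T}'=\mathbf{k}\mathbf{N}$, $\mathbf{N}'=-\mathbf{k}\mathbf{T}$; $'=D_s$ is the arc-length derivative, $D_s^{-1}$ a formal antiderivative). $\mathcal{P}=\mathbb{R}[k^{(m)}:m\in\mathbb{N}]$; $\mathcal{A}$ is the algebra of scalar fields $\mathbf{f}$ on $\Lambda_0$ with $\mathbf{f}_\gamma\in\mathcal{P}$ evaluated at $\mathbf{k}_\gamma$. $\mathfrak{X}_{\mathcal{A}}(\Lambda_0)=\{\mathbf{V}=\mathbf{f}\mathbf{T}+\mathbf{g}\mathbf{N}:\mathbf{f},\mathbf{g}\in\mathcal{A},\ \mathbf{f}_\gamma=D_s^{-1}(\mathbf{k}_\gamma\mathbf{g}_\gamma)\}$, a Lie algebra under $[\mathbf{V},\mathbf{W}](\gamma)=D_{\mathbf{V}_\gamma}\mathbf{W}_\gamma-D_{\mathbf{W}_\gamma}\mathbf{V}_\gamma$, where for $V=fT+gN$, $W=f_WT+g_WN$: $\varphi_V=g'+kf$, $\rho_V=f'-kg$, $V$ acts on $\mathcal{P}$ as the derivation with $V(k)=\varphi_V'-k\rho_V$, $V(h')=V(h)'+\rho_Vh'$, and $D_VW=(V(f_W)-g_W\varphi_V)T+(V(g_W)+f_W\varphi_V)N$. For $\mathbf{V}\in\mathfrak{X}_{\mathcal{A}}(\Lambda_0)$,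 $\mathbf{V}_\gamma(\mathbf{k}_\gamma)=\varphi_{\mathbf{V}_\gamma}'$. For $a\in\mathcal{P}$, $\partial_a=\sum_m a^{(m)}\partial/\partial k^{(m)}$; $\Phi_\gamma(\mathbf{V}_\gamma)=\partial_{\mathbf{V}_\gamma(\mathbf{k}_\gamma)}$, which is injective on $\mathfrak{X}_{\mathcal{A}}(\Lambda_0)$, and $\Phi_\gamma^{-1}$ denotes its inverse on the image. $\Omega^0=\{S=\int L\,ds: L=L(\mathbf{k},\mathbf{k}',\dots)\in\mathcal{A}\}$ (functionals modulo total derivatives), with $(\mathbf{V}S)(\gamma)=\int\mathbf{V}_\gamma(\mathbf{k}_\gamma)\frac{\delta L}{\delta\mathbf{k}_\gamma}ds$, $\frac{\delta L}{\delta k}=\sum_m(-D_s)^m\frac{\partial L}{\partial k^{(m)}}$. For $\mathbf{p}\in\mathcal{A}$, $\alpha_{\mathbf{p}}(\mathbf{V})=\int\mathbf{V}(\mathbf{k})\mathbf{p}\,ds\in\Omega^0$, and $\Omega^1=\{\alpha_{\mathbf{p}}:\mathbf{p}\in\mathcal{A},\ \exists\mathbf{p}_1\in\mathcal{A}\text{ with }\mathbf{p}_1'=\mathbf{k}\mathbf{p}'\}$. $\pi_1$ is the mKdV Hamiltonian operator $\pi_1(\alpha_p)=\partial_{\mathcal{D}(p)}$ with $\mathcal{D}=D_s^3+k'D_s^{-1}kD_s+k^2D_s$. *)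

theory Defs
  imports Main "HOL-Library.Poly_Mapping" Complex_Main
begin

text \<open>Differential polynomials P = R[k^(m) : m in N].  A monomial is a finitely
supported exponent map from nat to nat, a polynomial is
a finitely supported coefficient map on monomials.\<close>

type_synonym dpoly = "(nat \<Rightarrow>\<^sub>0 nat) \<Rightarrow>\<^sub>0 real"

text \<open>the variable k^(m); the curvature itself is kv 0\<close>
definition kv :: "nat \<Rightarrow> dpoly" where
  "kv m = Poly_Mapping.single (Poly_Mapping.single m 1) 1"

definition dconst :: "real \<Rightarrow> dpoly" where
  "dconst c = Poly_Mapping.single 0 c"

definition vars :: "dpoly \<Rightarrow> nat set" where
  "vars p = (\<Union>\<mu>\<in>Poly_Mapping.keys p. Poly_Mapping.keys \<mu>)"

definition pdiff :: "nat \<Rightarrow> dpoly \<Rightarrow> dpoly" where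
  "pdiff m p = (\<Sum>\<mu>\<in>Poly_Mapping.keys p. Poly_Mapping.single (\<mu> - Poly_Mapping.single m 1)
                                (Poly_Mapping.lookup p \<mu> * real (Poly_Mapping.lookup \<mu> m)))"

definition Ds :: "dpoly \<Rightarrow> dpoly" where
  "Ds p = (\<Sum>m\<in>vars p. kv (Suc m) * pdiff m p)"

definition evd :: "dpoly \<Rightarrow> dpoly \<Rightarrow> dpoly" where
  "evd a h = (\<Sum>m\<in>vars h. (Ds ^^ m) a * pdiff m h)"

definition vard :: "dpoly \<Rightarrow> dpoly" where
  "vard L = (\<Sum>m\<in>vars L. (- 1) ^ m * (Ds ^^ m) (pdiff m L))"

text \<open>Omega^0: functionals \<open>\<integral>L ds\<close> modulo total derivatives.  Two densities
represent the same functional iff their difference is a total derivative.\<close>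
definition ieq :: "dpoly \<Rightarrow> dpoly \<Rightarrow> bool" where
  "ieq L1 L2 \<longleftrightarrow> (\<exists>h. L1 - L2 = Ds h)"

text \<open>Vector fields V = f T + g N along curves, with f, g in P, given as pairs (f,g).\<close>
type_synonym vfield = "dpoly \<times> dpoly"

definition phiV :: "vfield \<Rightarrow> dpoly" where
  "phiV V = Ds (snd V) + kv 0 * fst V"

definition rhoV :: "vfield \<Rightarrow> dpoly" where
  "rhoV V = Ds (fst V) - kv 0 * snd V"

text \<open>V(k^(m)): V(k) = phi' - k rho,  V(h') = V(h)' + rho h'\<close>
fun vk :: "vfield \<Rightarrow> nat \<Rightarrow> dpoly" where
  "vk V 0 = Ds (phiV V) - kv 0 * rhoV V"
| "vk V (Suc m) = Ds (vk V m) + rhoV V * kv (Suc m)"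

definition vact :: "vfield \<Rightarrow> dpoly \<Rightarrow> dpoly" where
  "vact V h = (\<Sum>m\<in>vars h. vk V m * pdiff m h)"

definition XA :: "vfield set" where
  "XA = {(f, g). Ds f = kv 0 * g}"

definition covD :: "vfield \<Rightarrow> vfield \<Rightarrow> vfield" where
  "covD V W = (vact V (fst W) - snd W * phiV V, vact V (snd W) + fst W * phiV V)"

definition vbracket :: "vfield \<Rightarrow> vfield \<Rightarrow> vfield" where
  "vbracket V W = (fst (covD V W) - fst (covD W V), snd (covD V W) - snd (covD W V))"

definition vadd :: "vfield \<Rightarrow> vfield \<Rightarrow> vfield" where
  "vadd V W = (fst V + fst W, snd V + snd W)"

definition vscale :: "real \<Rightarrow> vfield \<Rightarrow> vfield" where
  "vscale c V = (dconst c * fst V, dconst c * snd V)"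

definition Omega1 :: "dpoly set" where
  "Omega1 = {p. \<exists>p1. Ds p1 = kv 0 * Ds p}"

text \<open>alpha_p(V) = \<integral> V(k) p ds  (a density representing an element of Omega^0)\<close>
definition alpha :: "dpoly \<Rightarrow> vfield \<Rightarrow> dpoly" where
  "alpha p V = vk V 0 * p"

text \<open>bar pi(alpha_p) = D_s^{-1}(k p') T + p' N, where p1 is the chosen
antiderivative D_s^{-1}(k p') (required: Ds p1 = k * Ds p)\<close>
definition pibar :: "dpoly \<Rightarrow> dpoly \<Rightarrow> vfield" where
  "pibar p p1 = (p1, Ds p)"

definition pibar_image :: "vfield set" where
  "pibar_image = {pibar p p1 | p p1. p \<in> Omega1 \<and> Ds p1 = kv 0 * Ds p}"

text \<open>V applied to the functional \<integral>L: \<integral> V(k) \<delta>L/\<delta>k ds\<close>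
definition vfun :: "vfield \<Rightarrow> dpoly \<Rightarrow> dpoly" where
  "vfun V L = vk V 0 * vard L"

text \<open>omega(xi, bar pi alpha_q) = alpha_q(xi)\<close>
definition omega :: "vfield \<Rightarrow> dpoly \<Rightarrow> dpoly" where
  "omega xi q = alpha q xi"

end

theory Submission imports Defs begin

text \<open>Every field in the image of \<open>\<pi>\<close> has \<open>\<rho> = 0\<close>, so its action on differential
polynomials is the evolutionary derivation \<open>\<partial>\<^bsub>V(k)\<^esub>\<close>, which commutes with \<open>D\<^sub>s\<close>.
For \<open>V = \<pi>(\<alpha>\<^sub>p)\<close> one has \<open>V(k) = (p'' + k a)'\<close> with \<open>a' = k p'\<close>, i.e. \<open>V(k)\<close> is the
mKdV operator applied to \<open>p\<close>.  Skew-symmetry of \<open>\<pi>\<close> is then one integration by parts.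
The bracket of two such fields again has \<open>\<rho> = 0\<close> and a normal component that is a total
derivative, hence lies in the image.  For closedness, \<open>V S = \<integral> V(k) \<delta>S/\<delta>k\<close> equals
\<open>\<integral> \<partial>\<^bsub>V(k)\<^esub> L\<close> after integrating by parts; expanding the three cyclic terms, the
derivatives of the densities cancel in pairs and what remains is a total derivative.\<close>

lemma sum_single_keys: "p = (\<Sum>\<mu>\<in>Poly_Mapping.keys p. Poly_Mapping.single \<mu> (Poly_Mapping.lookup p \<mu>))"
  for p :: dpoly
proof (rule poly_mapping_eqI)
  fix \<nu>
  show "Poly_Mapping.lookup p \<nu> =
        Poly_Mapping.lookup (\<Sum>\<mu>\<in>Poly_Mapping.keys p. Poly_Mapping.single \<mu> (Poly_Mapping.lookup p \<mu>)) \<nu>"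
    unfolding lookup_sum lookup_single
    by (cases "\<nu> \<in> Poly_Mapping.keys p") (auto simp: when_def in_keys_iff)
qed

lemma pdiff_add: "pdiff m (p + q) = pdiff m p + pdiff m q"
  unfolding pdiff_def
  by (rule setsum_keys_plus_distrib) (simp_all add: single_add distrib_right)

lemma pdiff_zero [simp]: "pdiff m 0 = 0"
  by (simp add: pdiff_def)

lemma pdiff_sum: "pdiff m (sum f A) = (\<Sum>x\<in>A. pdiff m (f x))"
  by (induction A rule: infinite_finite_induct) (auto simp: pdiff_add)

lemma pdiff_single: "pdiff m (Poly_Mapping.single \<mu> c) =
   Poly_Mapping.single (\<mu> - Poly_Mapping.single m 1) (c * real (Poly_Mapping.lookup \<mu> m))"
  by (cases "c = 0") (simp_all add: pdiff_def)

lemma diff_single_add_commute: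
  fixes \<mu> \<nu> :: "nat \<Rightarrow>\<^sub>0 nat"
  assumes "Poly_Mapping.lookup \<mu> m \<noteq> 0"
  shows "\<mu> - Poly_Mapping.single m 1 + \<nu> = \<mu> + \<nu> - Poly_Mapping.single m 1"
  using assms by (intro poly_mapping_eqI) (auto simp: lookup_minus lookup_add lookup_single when_def)

lemma pdiff_single_mult:
  "pdiff m (Poly_Mapping.single \<mu> c * Poly_Mapping.single \<nu> d) =
   pdiff m (Poly_Mapping.single \<mu> c) * Poly_Mapping.single \<nu> d
   + Poly_Mapping.single \<mu> c * pdiff m (Poly_Mapping.single \<nu> d)"
proof -
  let ?\<sigma> = "\<mu> + \<nu> - Poly_Mapping.single m 1"
  have left: "Poly_Mapping.single (\<mu> - Poly_Mapping.single m 1 + \<nu>) (c * real (Poly_Mapping.lookup \<mu> m) * d)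
      = Poly_Mapping.single ?\<sigma> (c * d * real (Poly_Mapping.lookup \<mu> m))"
    using diff_single_add_commute[of \<mu> m \<nu>]
    by (cases "Poly_Mapping.lookup \<mu> m = 0") (simp_all add: mult_ac)
  have right: "Poly_Mapping.single (\<mu> + (\<nu> - Poly_Mapping.single m 1)) (c * (d * real (Poly_Mapping.lookup \<nu> m)))
      = Poly_Mapping.single ?\<sigma> (c * d * real (Poly_Mapping.lookup \<nu> m))"
    using diff_single_add_commute[of \<nu> m \<mu>]
    by (cases "Poly_Mapping.lookup \<nu> m = 0") (simp_all add: add.commute mult_ac)
  show ?thesis
    unfolding pdiff_single mult_single left right single_add[symmetric]
    by (simp add: lookup_add algebra_simps)
qed

lemma pdiff_mult: "pdiff m (p * q) = pdiff m p * q + p * pdiff m q"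
proof -
  let ?s = "\<lambda>\<mu>. Poly_Mapping.single \<mu> (Poly_Mapping.lookup p \<mu>)"
  let ?t = "\<lambda>\<nu>. Poly_Mapping.single \<nu> (Poly_Mapping.lookup q \<nu>)"
  have "p * q = (\<Sum>\<mu>\<in>Poly_Mapping.keys p. \<Sum>\<nu>\<in>Poly_Mapping.keys q. ?s \<mu> * ?t \<nu>)"
    by (subst sum_single_keys[of p], subst sum_single_keys[of q]) (simp add: sum_product)
  hence "pdiff m (p * q) = (\<Sum>\<mu>\<in>Poly_Mapping.keys p. \<Sum>\<nu>\<in>Poly_Mapping.keys q.
                             pdiff m (?s \<mu>) * ?t \<nu> + ?s \<mu> * pdiff m (?t \<nu>))"
    by (simp add: pdiff_sum pdiff_single_mult)
  also have "\<dots> = (\<Sum>\<mu>\<in>Poly_Mapping.keys p. pdiff m (?s \<mu>)) * (\<Sum>\<nu>\<in>Poly_Mapping.keys q. ?t \<nu>)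
     + (\<Sum>\<mu>\<in>Poly_Mapping.keys p. ?s \<mu>) * (\<Sum>\<nu>\<in>Poly_Mapping.keys q. pdiff m (?t \<nu>))"
    by (simp add: sum.distrib sum_product)
  also have "\<dots> = pdiff m p * q + p * pdiff m q"
    by (simp flip: pdiff_sum sum_single_keys)
  finally show ?thesis .
qed

lemma finite_vars [simp]: "finite (vars p)"
  by (simp add: vars_def)

lemma pdiff_eq_0_if_not_in_vars: "m \<notin> vars p \<Longrightarrow> pdiff m p = 0"
  unfolding pdiff_def vars_def by (intro sum.neutral) (auto simp: in_keys_iff)

lemma vars_add: "vars (p + q) \<subseteq> vars p \<union> vars q"
  unfolding vars_def using keys_add[of p q] by blast

lemma vars_mult: "vars (p * q) \<subseteq> vars p \<union> vars q"
proof
  fix m assume "m \<in> vars (p * q)"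
  then obtain \<mu> where "\<mu> \<in> Poly_Mapping.keys (p * q)" "m \<in> Poly_Mapping.keys \<mu>"
    by (auto simp: vars_def)
  then obtain a b where "\<mu> = a + b" "a \<in> Poly_Mapping.keys p" "b \<in> Poly_Mapping.keys q"
    using keys_mult[of p q] by blast
  with \<open>m \<in> Poly_Mapping.keys \<mu>\<close> keys_add[of a b] show "m \<in> vars p \<union> vars q"
    by (auto simp: vars_def)
qed

lemma vars_kv: "vars (kv n) = {n}"
  by (simp add: vars_def kv_def)

lemma pdiff_kv: "pdiff m (kv n) = (if m = n then 1 else 0)"
  by (auto simp: kv_def pdiff_single lookup_single when_def)

section \<open>Derivations determined by their values on the variables\<close>

definition coord_der :: "(nat \<Rightarrow> dpoly) \<Rightarrow> dpoly \<Rightarrow> dpoly" where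
  "coord_der c p = (\<Sum>m\<in>vars p. c m * pdiff m p)"

lemma coord_der_superset:
  "finite S \<Longrightarrow> vars p \<subseteq> S \<Longrightarrow> coord_der c p = (\<Sum>m\<in>S. c m * pdiff m p)"
  unfolding coord_der_def
  by (rule sum.mono_neutral_left) (auto simp: pdiff_eq_0_if_not_in_vars)

lemma coord_der_add: "coord_der c (p + q) = coord_der c p + coord_der c q"
proof -
  have "coord_der c (p + q) = (\<Sum>m\<in>vars p \<union> vars q. c m * pdiff m (p + q))"
    using vars_add[of p q] by (intro coord_der_superset) auto
  also have "\<dots> = (\<Sum>m\<in>vars p \<union> vars q. c m * pdiff m p) + (\<Sum>m\<in>vars p \<union> vars q. c m * pdiff m q)"
    by (simp add: pdiff_add distrib_left sum.distrib)
  finally show ?thesis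
    by (simp add: coord_der_superset[of "vars p \<union> vars q"])
qed

lemma coord_der_mult: "coord_der c (p * q) = coord_der c p * q + p * coord_der c q"
proof -
  have "coord_der c (p * q) = (\<Sum>m\<in>vars p \<union> vars q. c m * pdiff m (p * q))"
    using vars_mult[of p q] by (intro coord_der_superset) auto
  also have "\<dots> = (\<Sum>m\<in>vars p \<union> vars q. c m * pdiff m p) * q
                 + p * (\<Sum>m\<in>vars p \<union> vars q. c m * pdiff m q)"
    by (simp add: pdiff_mult distrib_left sum.distrib sum_distrib_left sum_distrib_right mult_ac)
  finally show ?thesis
    by (simp add: coord_der_superset[of "vars p \<union> vars q"])
qed

lemma coord_der_minus: "coord_der c (- p) = - coord_der c p"
  using coord_der_add[of c "- p" p] by (simp add: coord_der_def vars_def eq_neg_iff_add_eq_0)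

lemma coord_der_diff: "coord_der c (p - q) = coord_der c p - coord_der c q"
  using coord_der_add[of c p "- q"] coord_der_minus[of c q] by simp

lemma coord_der_kv: "coord_der c (kv n) = c n"
  by (simp add: coord_der_def vars_kv pdiff_kv)

lemma coord_der_dconst: "coord_der c (dconst a) = 0"
  by (simp add: coord_der_def vars_def dconst_def)

lemma Ds_eq_coord_der: "Ds = coord_der (\<lambda>m. kv (Suc m))"
  by (simp add: fun_eq_iff Ds_def coord_der_def)

lemma evd_eq_coord_der: "evd a = coord_der (\<lambda>m. (Ds ^^ m) a)"
  by (simp add: fun_eq_iff evd_def coord_der_def)

lemma Ds_add: "Ds (p + q) = Ds p + Ds q"
  and Ds_diff: "Ds (p - q) = Ds p - Ds q"
  and Ds_minus: "Ds (- p) = - Ds p"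
  and Ds_mult: "Ds (p * q) = Ds p * q + p * Ds q"
  and Ds_kv [simp]: "Ds (kv n) = kv (Suc n)"
  and Ds_dconst [simp]: "Ds (dconst c) = 0"
  by (simp_all add: Ds_eq_coord_der coord_der_add coord_der_diff coord_der_minus coord_der_mult
                    coord_der_kv coord_der_dconst)

lemma evd_add: "evd a (p + q) = evd a p + evd a q"
  and evd_mult: "evd a (p * q) = evd a p * q + p * evd a q"
  and evd_kv [simp]: "evd a (kv n) = (Ds ^^ n) a"
  and evd_dconst [simp]: "evd a (dconst c) = 0"
  by (simp_all add: evd_eq_coord_der coord_der_add coord_der_mult coord_der_kv coord_der_dconst)

lemma Ds_zero [simp]: "Ds 0 = 0"
  and Ds_one [simp]: "Ds 1 = 0"
  and evd_zero [simp]: "evd a 0 = 0"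
  using Ds_dconst[of 0] Ds_dconst[of 1] evd_dconst[of a 0] by (simp_all add: dconst_def)

definition is_derivation :: "(dpoly \<Rightarrow> dpoly) \<Rightarrow> bool" where
  "is_derivation \<delta> \<longleftrightarrow> (\<forall>p q. \<delta> (p + q) = \<delta> p + \<delta> q) \<and> (\<forall>p q. \<delta> (p * q) = \<delta> p * q + p * \<delta> q)"

lemma update_eq_add_single:
  "a \<notin> Poly_Mapping.keys f \<Longrightarrow> Poly_Mapping.update a b f = f + Poly_Mapping.single a b"
  for f :: "nat \<Rightarrow>\<^sub>0 nat"
  by (intro poly_mapping_eqI) (auto simp: lookup_update lookup_add lookup_single when_def in_keys_iff)

lemma single_single_eq_kv_power: "Poly_Mapping.single (Poly_Mapping.single a b) (1::real) = kv a ^ b"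
proof (induction b)
  case (Suc b)
  have "Poly_Mapping.single a (Suc b) = Poly_Mapping.single a b + Poly_Mapping.single a 1"
    by (simp flip: single_add)
  hence "Poly_Mapping.single (Poly_Mapping.single a (Suc b)) (1::real) =
         Poly_Mapping.single (Poly_Mapping.single a b) 1 * kv a"
    by (simp add: kv_def mult_single)
  with Suc show ?case by (simp add: mult_ac)
qed simp

lemma derivation_eq_0I:
  assumes "is_derivation \<delta>" and kv: "\<And>n. \<delta> (kv n) = 0" and dconst: "\<And>c. \<delta> (dconst c) = 0"
  shows "\<delta> p = 0"
proof -
  have add: "\<delta> (p + q) = \<delta> p + \<delta> q" and mult: "\<delta> (p * q) = \<delta> p * q + p * \<delta> q" for p q
    using assms(1) by (simp_all add: is_derivation_def)
  have one: "\<delta> 1 = 0"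
    using dconst[of 1] by (simp add: dconst_def)
  have sum: "\<delta> (sum f A) = (\<Sum>x\<in>A. \<delta> (f x))" for f :: "'a \<Rightarrow> dpoly" and A
    using add[of 0 0] by (induction A rule: infinite_finite_induct) (auto simp: add)
  have power: "\<delta> (kv n ^ e) = 0" for n e
    by (induction e) (auto simp: mult one kv)
  have monomial: "\<delta> (Poly_Mapping.single \<mu> 1) = 0" for \<mu>
  proof (induction \<mu> rule: update_induct)
    case (update f a b)
    hence "Poly_Mapping.single (Poly_Mapping.update a b f) (1::real) = Poly_Mapping.single f 1 * kv a ^ b"
      by (simp add: update_eq_add_single mult_single flip: single_single_eq_kv_power)
    with update show ?case by (simp add: mult power)
  qed (simp add: one)
  have single_eq_0: "\<delta> (Poly_Mapping.single \<mu> c) = 0" for \<mu> c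
  proof -
    have "Poly_Mapping.single \<mu> c = dconst c * Poly_Mapping.single \<mu> 1"
      by (simp add: dconst_def mult_single)
    thus ?thesis by (simp add: mult dconst monomial)
  qed
  show ?thesis by (subst sum_single_keys) (simp add: sum single_eq_0)
qed

lemma evd_Ds_commute: "evd a (Ds p) = Ds (evd a p)"
proof -
  let ?\<delta> = "\<lambda>p. evd a (Ds p) - Ds (evd a p)"
  have "is_derivation ?\<delta>"
    unfolding is_derivation_def by (simp add: Ds_add evd_add Ds_mult evd_mult algebra_simps)
  hence "?\<delta> p = 0" by (rule derivation_eq_0I) simp_all
  thus ?thesis by simp
qed

section \<open>Densities modulo total derivatives\<close>

lemma ieq_refl [simp]: "ieq x x"
  unfolding ieq_def by (rule exI[of _ 0]) simp

lemma ieq_trans [trans]: "ieq x y \<Longrightarrow> ieq y z \<Longrightarrow> ieq x z"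
  unfolding ieq_def by (metis Ds_add diff_add_cancel add_diff_eq)

lemma ieq_add: "ieq x y \<Longrightarrow> ieq u v \<Longrightarrow> ieq (x + u) (y + v)"
  unfolding ieq_def by (metis Ds_add add_diff_add)

lemma ieq_sum: "(\<And>i. i \<in> A \<Longrightarrow> ieq (f i) (g i)) \<Longrightarrow> ieq (sum f A) (sum g A)"
  by (induction A rule: infinite_finite_induct) (auto intro: ieq_add)

lemma ieq_iff: "ieq x y \<longleftrightarrow> (\<exists>h. x = y + Ds h)"
  unfolding ieq_def by (auto simp: algebra_simps)

lemma ieqI: "x = y + Ds h \<Longrightarrow> ieq x y"
  unfolding ieq_iff by blast

lemma ieq_by_parts: "ieq ((- 1) ^ m * (f * (Ds ^^ m) g)) ((Ds ^^ m) f * g)"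
proof (induction m arbitrary: f)
  case (Suc m)
  let ?s = "(- 1) ^ m :: dpoly" and ?G = "(Ds ^^ m) g"
  have "Ds ?s = 0"
    by (induction m) (simp_all add: Ds_mult Ds_minus)
  hence "(- 1) ^ Suc m * (f * (Ds ^^ Suc m) g) = ?s * (Ds f * ?G) + Ds (- (?s * (f * ?G)))"
    by (simp add: Ds_mult Ds_minus algebra_simps)
  hence "ieq ((- 1) ^ Suc m * (f * (Ds ^^ Suc m) g)) (?s * (Ds f * ?G))"
    by (rule ieqI)
  also have "ieq (?s * (Ds f * ?G)) ((Ds ^^ Suc m) f * g)"
    using Suc[of "Ds f"] by (simp only: funpow_Suc_right comp_def)
  finally show ?case .
qed simp

lemma vard_by_parts: "ieq (a * vard L) (evd a L)"
proof -
  have "a * vard L = (\<Sum>m\<in>vars L. (- 1) ^ m * (a * (Ds ^^ m) (pdiff m L)))"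
    by (simp add: vard_def sum_distrib_left mult_ac)
  also have "ieq \<dots> (\<Sum>m\<in>vars L. (Ds ^^ m) a * pdiff m L)"
    by (rule ieq_sum) (rule ieq_by_parts)
  finally show ?thesis by (simp add: evd_def)
qed

lemma XA_iff_rhoV: "V \<in> XA \<longleftrightarrow> rhoV V = 0"
  by (cases V) (simp add: XA_def rhoV_def)

lemma vk_XA: "V \<in> XA \<Longrightarrow> vk V m = (Ds ^^ m) (vk V 0)"
  by (induction m) (auto simp: XA_iff_rhoV)

lemma vk0_XA: "V \<in> XA \<Longrightarrow> vk V 0 = Ds (phiV V)"
  by (simp add: XA_iff_rhoV)

lemma vact_XA: "V \<in> XA \<Longrightarrow> vact V = evd (vk V 0)"
  by (auto simp: fun_eq_iff vact_def evd_def vk_XA)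

lemma vbracket_XA:
  assumes "V \<in> XA" and "W \<in> XA"
  shows "vbracket V W \<in> XA"
    and "phiV (vbracket V W) = evd (vk V 0) (phiV W) - evd (vk W 0) (phiV V)"
proof -
  obtain f g f' g' where V: "V = (f, g)" and W: "W = (f', g')" by fastforce
  have hV: "Ds f = kv 0 * g" and hW: "Ds f' = kv 0 * g'"
    using assms by (simp_all add: V W XA_def)
  note act = vact_XA[OF assms(1)] vact_XA[OF assms(2)] vk0_XA[OF assms(1)] vk0_XA[OF assms(2)]
  show "vbracket V W \<in> XA"
    unfolding XA_iff_rhoV vbracket_def covD_def act
    unfolding rhoV_def phiV_def V W
    by (simp add: Ds_add Ds_diff Ds_mult evd_add evd_mult hV hW algebra_simps flip: evd_Ds_commute)
  show "phiV (vbracket V W) = evd (vk V 0) (phiV W) - evd (vk W 0) (phiV V)"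
    unfolding vbracket_def covD_def act
    unfolding phiV_def V W
    by (simp add: Ds_add Ds_diff Ds_mult evd_add evd_mult hV hW algebra_simps flip: evd_Ds_commute)
qed

lemma vk_vbracket:
  assumes "V \<in> XA" and "W \<in> XA"
  shows "vk (vbracket V W) 0 = evd (vk V 0) (vk W 0) - evd (vk W 0) (vk V 0)"
  unfolding vk0_XA[OF vbracket_XA(1)[OF assms]] vbracket_XA(2)[OF assms]
  by (simp only: Ds_diff evd_Ds_commute vk0_XA[OF assms(1)] vk0_XA[OF assms(2)])

section \<open>The mKdV operator\<close>

text \<open>With \<open>a = D\<^sub>s\<^sup>-\<^sup>1(k p')\<close> this is \<open>\<D>(p) = p''' + k' D\<^sub>s\<^sup>-\<^sup>1(k p') + k\<^sup>2 p'\<close>.\<close>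
definition mkdv :: "dpoly \<Rightarrow> dpoly \<Rightarrow> dpoly" where
  "mkdv p a = Ds (Ds (Ds p) + kv 0 * a)"

lemma pibar_XA: "Ds a = kv 0 * Ds p \<Longrightarrow> pibar p a \<in> XA"
  by (simp add: pibar_def XA_def)

lemma vk_pibar: "Ds a = kv 0 * Ds p \<Longrightarrow> vk (pibar p a) 0 = mkdv p a"
  using vk0_XA[OF pibar_XA] by (simp add: pibar_def phiV_def mkdv_def)

lemma vact_pibar: "Ds a = kv 0 * Ds p \<Longrightarrow> vact (pibar p a) = evd (mkdv p a)"
  using vact_XA[OF pibar_XA] vk_pibar by simp

lemma mkdv_by_parts:
  "ieq (q * mkdv p a + p * mkdv q b) (- (kv 0 * (a * Ds q + b * Ds p)))"
proof -
  have "q * mkdv p a + p * mkdv q b = - (kv 0 * (a * Ds q + b * Ds p))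
          + Ds (q * (Ds (Ds p) + kv 0 * a) + p * (Ds (Ds q) + kv 0 * b) - Ds p * Ds q)"
    by (simp add: mkdv_def Ds_add Ds_diff Ds_mult algebra_simps)
  thus ?thesis by (rule ieqI)
qed

lemma evd_mkdv: "evd b (mkdv p a) = mkdv (evd b p) (evd b a) + Ds (b * a)"
  by (simp add: mkdv_def evd_Ds_commute evd_add evd_mult Ds_add)

lemma evd_mkdv_by_parts:
  assumes hp: "Ds a = kv 0 * Ds p" and hq: "Ds c = kv 0 * Ds q"
  shows "ieq (evd b (mkdv p a) * q) (- (evd b p * mkdv q c) + b * (c * Ds p - a * Ds q))"
proof -
  define u where "u = evd b p"
  define w where "w = evd b a"
  \<comment> \<open>\<open>w\<close> is not a potential for \<open>u\<close>; the defect \<open>b p'\<close> produces the term \<open>b (c p' - a q')\<close>\<close>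
  have hw: "Ds w = b * Ds p + kv 0 * Ds u"
    using arg_cong[OF hp, of "evd b"] by (simp add: u_def w_def evd_Ds_commute evd_mult)
  obtain h where h: "q * mkdv u w + u * mkdv q c = - (kv 0 * (w * Ds q + c * Ds u)) + Ds h"
    using mkdv_by_parts[of q u w c] by (auto simp: ieq_iff)
  have "evd b (mkdv p a) * q
        = - (u * mkdv q c) + b * (c * Ds p - a * Ds q) + Ds (h - w * c + b * a * q)"
    unfolding evd_mkdv u_def[symmetric] w_def[symmetric]
    using h by (simp add: Ds_add Ds_diff Ds_mult hq hw algebra_simps)
  thus ?thesis unfolding u_def by (rule ieqI)
qed

lemma pibar_skew:
  assumes hp: "Ds p1 = kv 0 * Ds p" and hq: "Ds q1 = kv 0 * Ds q"
  shows "ieq (alpha q (pibar p p1)) (- alpha p (pibar q q1))"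
proof -
  obtain h where h: "q * mkdv p p1 + p * mkdv q q1 = - (kv 0 * (p1 * Ds q + q1 * Ds p)) + Ds h"
    using mkdv_by_parts[of q p p1 q1] by (auto simp: ieq_iff)
  have "alpha q (pibar p p1) = - alpha p (pibar q q1) + Ds (h - p1 * q1)"
    unfolding alpha_def vk_pibar[OF hp] vk_pibar[OF hq]
    using h by (simp add: Ds_diff Ds_mult hp hq algebra_simps)
  thus ?thesis by (rule ieqI)
qed

lemma pibar_image_subset_XA: "pibar_image \<subseteq> XA"
  by (auto simp: pibar_image_def pibar_XA)

lemma pibar_image_iff: "V \<in> pibar_image \<longleftrightarrow> (\<exists>p a. Ds a = kv 0 * Ds p \<and> V = pibar p a)"
  by (auto simp: pibar_image_def Omega1_def)

lemma pibar_imageI: "V \<in> XA \<Longrightarrow> snd V = Ds r \<Longrightarrow> V \<in> pibar_image"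
  unfolding pibar_image_iff
  by (rule exI[of _ r], rule exI[of _ "fst V"]) (auto simp: XA_def pibar_def)

lemma pibar_image_vadd:
  assumes "V \<in> pibar_image" and "W \<in> pibar_image"
  shows "vadd V W \<in> pibar_image"
proof -
  obtain p a q b where "Ds a = kv 0 * Ds p" "V = pibar p a" "Ds b = kv 0 * Ds q" "W = pibar q b"
    using assms by (auto simp: pibar_image_iff)
  thus ?thesis unfolding pibar_image_iff
    by (intro exI[of _ "p + q"] exI[of _ "a + b"]) (simp add: vadd_def pibar_def Ds_add algebra_simps)
qed

lemma pibar_image_vscale:
  assumes "V \<in> pibar_image"
  shows "vscale c V \<in> pibar_image"
proof -
  obtain p a where "Ds a = kv 0 * Ds p" "V = pibar p a"
    using assms by (auto simp: pibar_image_iff)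
  thus ?thesis unfolding pibar_image_iff
    by (intro exI[of _ "dconst c * p"] exI[of _ "dconst c * a"]) (simp add: vscale_def pibar_def Ds_mult)
qed

lemma pibar_image_vbracket:
  assumes "V \<in> pibar_image" and "W \<in> pibar_image"
  shows "vbracket V W \<in> pibar_image"
proof -
  obtain p a q b where hp: "Ds a = kv 0 * Ds p" and V: "V = pibar p a"
    and hq: "Ds b = kv 0 * Ds q" and W: "W = pibar q b"
    using assms by (auto simp: pibar_image_iff)
  have "snd (vbracket V W) = Ds (evd (mkdv p a) q - evd (mkdv q b) p + b * Ds p - a * Ds q)"
    unfolding V W vbracket_def covD_def vact_pibar[OF hp] vact_pibar[OF hq]
    by (simp add: pibar_def phiV_def Ds_add Ds_diff Ds_mult evd_Ds_commute hp hq algebra_simps)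
  with vbracket_XA(1)[OF pibar_XA[OF hp] pibar_XA[OF hq]] show ?thesis
    unfolding V W by (rule pibar_imageI)
qed

section \<open>Closedness of \<open>\<omega>\<close>\<close>

lemma omega_cyclic_term:
  assumes hp: "Ds a = kv 0 * Ds p" and hq: "Ds b = kv 0 * Ds q" and hr: "Ds c = kv 0 * Ds r"
  defines "A \<equiv> mkdv p a" and "B \<equiv> mkdv q b" and "C \<equiv> mkdv r c"
  shows "ieq (vfun (pibar p a) (omega (pibar q b) r) - omega (vbracket (pibar p a) (pibar q b)) r)
             (B * evd A r - evd B p * C + B * (c * Ds p - a * Ds r))"
proof -
  obtain h where h: "A * vard (B * r) = evd A B * r + B * evd A r + Ds h"
    using vard_by_parts[of A "B * r"] by (auto simp: ieq_iff evd_mult)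
  obtain g where g: "evd B A * r = - (evd B p * C) + B * (c * Ds p - a * Ds r) + Ds g"
    using evd_mkdv_by_parts[OF hp hr, of B] by (auto simp: ieq_iff A_def C_def)
  have "vfun (pibar p a) (omega (pibar q b) r) = A * vard (B * r)"
    unfolding vfun_def omega_def alpha_def vk_pibar[OF hp] vk_pibar[OF hq] A_def B_def ..
  moreover have "omega (vbracket (pibar p a) (pibar q b)) r = (evd A B - evd B A) * r"
    unfolding omega_def alpha_def vk_vbracket[OF pibar_XA[OF hp] pibar_XA[OF hq]]
      vk_pibar[OF hp] vk_pibar[OF hq] A_def B_def ..
  ultimately have "vfun (pibar p a) (omega (pibar q b) r) - omega (vbracket (pibar p a) (pibar q b)) r
      = A * vard (B * r) - evd A B * r + evd B A * r"
    by (simp add: algebra_simps)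
  also have "\<dots> = B * evd A r - evd B p * C + B * (c * Ds p - a * Ds r) + Ds (h + g)"
    unfolding h g by (simp add: Ds_add algebra_simps)
  finally show ?thesis by (rule ieqI)
qed

lemma omega_cyclic_sum:
  assumes h1: "Ds a1 = kv 0 * Ds p1" and h2: "Ds a2 = kv 0 * Ds p2" and h3: "Ds a3 = kv 0 * Ds p3"
  defines "A1 \<equiv> mkdv p1 a1" and "A2 \<equiv> mkdv p2 a2" and "A3 \<equiv> mkdv p3 a3"
  shows "ieq ((A2 * evd A1 p3 - evd A2 p1 * A3 + A2 * (a3 * Ds p1 - a1 * Ds p3))
            + (A3 * evd A2 p1 - evd A3 p2 * A1 + A3 * (a1 * Ds p2 - a2 * Ds p1))
            + (A1 * evd A3 p2 - evd A1 p3 * A2 + A1 * (a2 * Ds p3 - a3 * Ds p2))) 0"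
proof (rule ieqI)
  show "(A2 * evd A1 p3 - evd A2 p1 * A3 + A2 * (a3 * Ds p1 - a1 * Ds p3))
      + (A3 * evd A2 p1 - evd A3 p2 * A1 + A3 * (a1 * Ds p2 - a2 * Ds p1))
      + (A1 * evd A3 p2 - evd A1 p3 * A2 + A1 * (a2 * Ds p3 - a3 * Ds p2))
      = 0 + Ds ((Ds (Ds p2) + kv 0 * a2) * (a3 * Ds p1 - a1 * Ds p3)
              + (Ds (Ds p3) + kv 0 * a3) * (a1 * Ds p2 - a2 * Ds p1)
              + (Ds (Ds p1) + kv 0 * a1) * (a2 * Ds p3 - a3 * Ds p2))"
    unfolding A1_def A2_def A3_def mkdv_def
    by (simp only: Ds_add Ds_diff Ds_mult h1 h2 h3) (simp add: algebra_simps)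
qed

lemma omega_closed:
  assumes h1: "Ds a1 = kv 0 * Ds p1" and h2: "Ds a2 = kv 0 * Ds p2" and h3: "Ds a3 = kv 0 * Ds p3"
  defines "x1 \<equiv> pibar p1 a1" and "x2 \<equiv> pibar p2 a2" and "x3 \<equiv> pibar p3 a3"
  shows "ieq ((vfun x1 (omega x2 p3) - omega (vbracket x1 x2) p3)
            + (vfun x2 (omega x3 p1) - omega (vbracket x2 x3) p1)
            + (vfun x3 (omega x1 p2) - omega (vbracket x3 x1) p2)) 0"
  unfolding x1_def x2_def x3_def
  using ieq_trans[OF ieq_add[OF ieq_add[OF omega_cyclic_term[OF h1 h2 h3] omega_cyclic_term[OF h2 h3 h1]]
                                omega_cyclic_term[OF h3 h1 h2]]
                     omega_cyclic_sum[OF h1 h2 h3]] .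

theorem theorem5p3:
  shows
    "(\<forall>p q p1 q1. p \<in> Omega1 \<and> q \<in> Omega1 \<and> Ds p1 = kv 0 * Ds p \<and> Ds q1 = kv 0 * Ds q \<longrightarrow>
        ieq (alpha q (pibar p p1)) (- alpha p (pibar q q1)))
     \<and> pibar_image \<subseteq> XA
     \<and> (\<forall>V\<in>pibar_image. \<forall>W\<in>pibar_image.
          vadd V W \<in> pibar_image \<and> (\<forall>c. vscale c V \<in> pibar_image) \<and> vbracket V W \<in> pibar_image)
     \<and> (\<forall>p1 p2 p3 a1 a2 a3.
          p1 \<in> Omega1 \<and> p2 \<in> Omega1 \<and> p3 \<in> Omega1 \<and>
          Ds a1 = kv 0 * Ds p1 \<and> Ds a2 = kv 0 * Ds p2 \<and> Ds a3 = kv 0 * Ds p3 \<longrightarrow>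
          (let x1 = pibar p1 a1; x2 = pibar p2 a2; x3 = pibar p3 a3 in
           ieq ((vfun x1 (omega x2 p3) - omega (vbracket x1 x2) p3)
              + (vfun x2 (omega x3 p1) - omega (vbracket x2 x3) p1)
              + (vfun x3 (omega x1 p2) - omega (vbracket x3 x1) p2)) 0))"
  using pibar_skew pibar_image_subset_XA pibar_image_vadd pibar_image_vscale pibar_image_vbracket
    omega_closed
  by (simp add: Let_def)

end
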